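(* Let $A=2^\omega$, the set of subsets of $\omega$, partially ordered by inclusion, and let $U_\subseteq(A)\subseteq 2^A$ be its set of up-sets. For each $n\in\omega$ let $e_n\in U_\subseteq(A)$ be the set of subsets of $\omega$ containing $n$. Then for $x\in U_\subseteq(A)$ the following are equivalent: (i) $x$ is an isolated point of $U_\subseteq(A)$ in the topology induced by the natural topology on $2^A$; (ii) $x$ is both the union of a finite (possibly empty) family of principal up-sets of $A$ and the intersection of a finite (possibly empty) family of complements of principal down-sets of $A$; (iii) $x$ lies in the closure of $\{e_n\mid n\in\omega\}\cup\{\emptyset,A\}$ under pairwise unions and intersections.
   Context: An up-set of a poset is a subset closed upward; ${\uparrow}(a)=\{b\mid b\supseteq a\}$ and ${\downarrow}(a)=\{b\mid b\subseteq a\}$ are the principal up-set and principal down-set determined by $a\in A$; complements are in $A$. The natural topology on $2^A$ (the set of subsets of $A$) is the product topology of copies of the discrete space $\{0,1\}$, with subbasis the sets $\{x\mid a\in x\}$ and $\{x\mid a\notin x\}$ for $a\in A$. *)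

theory Defs
  imports "HOL-Analysis.Analysis"
begin

definition natural_topology :: "'a set topology" where
  "natural_topology =
     topology_generated_by ({{x. a \<in> x} | a. True} \<union> {{x. a \<notin> x} | a. True})"

definition upsets :: "nat set set set" where
  "upsets = {x. \<forall>a b. a \<in> x \<and> a \<subseteq> b \<longrightarrow> b \<in> x}"

definition up :: "nat set \<Rightarrow> nat set set" where
  "up a = {b. a \<subseteq> b}"

definition down :: "nat set \<Rightarrow> nat set set" where
  "down a = {b. b \<subseteq> a}"

definition e :: "nat \<Rightarrow> nat set set" where
  "e n = {a. n \<in> a}"

inductive_set lattice_gen :: "nat set set set" where
  gen_e: "e n \<in> lattice_gen"
| gen_empty: "{} \<in> lattice_gen"
| gen_univ: "UNIV \<in> lattice_gen"
| gen_un: "x \<in> lattice_gen \<Longrightarrow> y \<in> lattice_gen \<Longrightarrow> x \<union> y \<in> lattice_gen"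
| gen_int: "x \<in> lattice_gen \<Longrightarrow> y \<in> lattice_gen \<Longrightarrow> x \<inter> y \<in> lattice_gen"

end

theory Submission
  imports Defs
begin

text \<open>Basic open sets of the natural topology are the cylinders
  \<open>{y. A \<subseteq> y \<and> B \<inter> y = {}}\<close> with \<open>A\<close>, \<open>B\<close> finite. Among up-sets such a cylinder is the
  interval between the up-sets \<open>\<Union>a\<in>A. up a\<close> and \<open>\<Inter>b\<in>B. - down b\<close>, so it isolates \<open>x\<close>
  exactly when both bounds equal \<open>x\<close>. Both kinds of finite representation are closed under
  binary unions and intersections and cover the generators. Conversely, if
  \<open>x = (\<Union>a\<in>F. up a) = (\<Inter>b\<in>G. - down b)\<close>, each \<open>a \<in> F\<close> escapes every \<open>b \<in> G\<close> at some point;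
  these finitely many points form a finite \<open>c \<subseteq> a\<close> still in \<open>x\<close>, so \<open>x\<close> is a finite union of the
  sets \<open>up c = (\<Inter>n\<in>c. e n)\<close>.\<close>

definition cylinder :: "'a set \<Rightarrow> 'a set \<Rightarrow> 'a set set" where
  "cylinder A B = {y. A \<subseteq> y \<and> B \<inter> y = {}}"

lemma topspace_natural_topology [simp]: "topspace natural_topology = UNIV"
  unfolding natural_topology_def by auto

lemma openin_cylinder:
  assumes "finite A" "finite B"
  shows "openin natural_topology (cylinder A B)"
proof -
  have "openin natural_topology {x. a \<in> x}" "openin natural_topology {x. a \<notin> x}" for a :: 'a
    unfolding natural_topology_def by (auto intro: topology_generated_by_Basis)
  then have "openin natural_topology ((\<Inter>a\<in>A. {x. a \<in> x}) \<inter> (\<Inter>b\<in>B. {x. b \<notin> x}))"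
    using openin_INT[OF assms(1)] openin_INT[OF assms(2)]
    by (metis Int_UNIV_right openin_Int topspace_natural_topology)
  moreover have "cylinder A B = (\<Inter>a\<in>A. {x. a \<in> x}) \<inter> (\<Inter>b\<in>B. {x. b \<notin> x})"
    by (auto simp: cylinder_def)
  ultimately show ?thesis by simp
qed

lemma cylinder_Un: "cylinder (A \<union> A') (B \<union> B') = cylinder A B \<inter> cylinder A' B'"
  by (auto simp: cylinder_def)

lemma openin_natural_topology_cylinder:
  assumes "openin natural_topology U" "p \<in> U"
  obtains A B where "finite A" "finite B" "p \<in> cylinder A B" "cylinder A B \<subseteq> U"
proof -
  have "generate_topology_on ({{x. a \<in> x} | a. True} \<union> {{x. a \<notin> x} | a. True}) U"
    using assms(1) by (simp add: natural_topology_def openin_topology_generated_by_iff)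
  then have "\<forall>p\<in>U. \<exists>A B. finite A \<and> finite B \<and> p \<in> cylinder A B \<and> cylinder A B \<subseteq> U"
  proof (induction rule: generate_topology_on.induct)
    case Empty
    then show ?case by simp
  next
    case (Int U V)
    show ?case
    proof
      fix p assume "p \<in> U \<inter> V"
      with Int.IH obtain A B A' B' where
        "finite A" "finite B" "p \<in> cylinder A B" "cylinder A B \<subseteq> U"
        "finite A'" "finite B'" "p \<in> cylinder A' B'" "cylinder A' B' \<subseteq> V"
        by (metis IntD1 IntD2)
      then show "\<exists>A B. finite A \<and> finite B \<and> p \<in> cylinder A B \<and> cylinder A B \<subseteq> U \<inter> V"
        by (intro exI[of _ "A \<union> A'"] exI[of _ "B \<union> B'"]) (auto simp: cylinder_Un)
    qed
  next
    case (UN K)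
    then show ?case by (meson Union_iff Union_upper order_trans)
  next
    case (Basis s)
    then obtain a where "s = {x. a \<in> x} \<or> s = {x. a \<notin> x}" by blast
    then have "s = cylinder {a} {} \<or> s = cylinder {} {a}" by (auto simp: cylinder_def)
    then show ?case by blast
  qed
  then show ?thesis using assms(2) that by blast
qed

lemma isolated_in_natural_topology:
  assumes "x \<in> S"
  shows "openin (subtopology natural_topology S) {x} \<longleftrightarrow>
           (\<exists>A B. finite A \<and> finite B \<and> x \<in> cylinder A B \<and> cylinder A B \<inter> S = {x})"
proof
  assume "openin (subtopology natural_topology S) {x}"
  then obtain U where U: "openin natural_topology U" "{x} = U \<inter> S"
    by (auto simp: openin_subtopology)
  moreover have "x \<in> U" using U(2) by blast
  ultimately obtain A B where "finite A" "finite B" "x \<in> cylinder A B" "cylinder A B \<subseteq> U"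
    using openin_natural_topology_cylinder by blast
  with U(2) assms show "\<exists>A B. finite A \<and> finite B \<and> x \<in> cylinder A B \<and> cylinder A B \<inter> S = {x}"
    by blast
next
  assume "\<exists>A B. finite A \<and> finite B \<and> x \<in> cylinder A B \<and> cylinder A B \<inter> S = {x}"
  then obtain A B where "finite A" "finite B" "{x} = cylinder A B \<inter> S"
    by auto
  then show "openin (subtopology natural_topology S) {x}"
    unfolding openin_subtopology by (blast intro: openin_cylinder)
qed

lemma UN_up_in_upsets: "(\<Union>a\<in>F. up a) \<in> upsets"
  by (auto simp: upsets_def up_def)

lemma INT_compl_down_in_upsets: "(\<Inter>b\<in>G. - down b) \<in> upsets"
  by (auto simp: upsets_def down_def)

lemma cylinder_Int_upsets:
  "cylinder A B \<inter> upsets = {y \<in> upsets. (\<Union>a\<in>A. up a) \<subseteq> y \<and> y \<subseteq> (\<Inter>b\<in>B. - down b)}"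
  unfolding cylinder_def upsets_def up_def down_def by auto

definition finite_union_of_ups :: "nat set set \<Rightarrow> bool" where
  "finite_union_of_ups x \<longleftrightarrow> (\<exists>F. finite F \<and> x = (\<Union>a\<in>F. up a))"

definition finite_inter_of_codowns :: "nat set set \<Rightarrow> bool" where
  "finite_inter_of_codowns x \<longleftrightarrow> (\<exists>G. finite G \<and> x = (\<Inter>b\<in>G. - down b))"

lemma isolated_upset_iff:
  assumes "x \<in> upsets"
  shows "openin (subtopology natural_topology upsets) {x} \<longleftrightarrow>
           finite_union_of_ups x \<and> finite_inter_of_codowns x"
proof
  assume "openin (subtopology natural_topology upsets) {x}"
  then obtain A B where "finite A" "finite B" "x \<in> cylinder A B"
    and singleton: "cylinder A B \<inter> upsets = {x}"
    using isolated_in_natural_topology[OF assms] by blast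
  let ?lower = "\<Union>a\<in>A. up a" and ?upper = "\<Inter>b\<in>B. - down b"
  have "x \<in> cylinder A B \<inter> upsets"
    using \<open>x \<in> cylinder A B\<close> assms by blast
  then have "?lower \<subseteq> x" "x \<subseteq> ?upper"
    unfolding cylinder_Int_upsets by simp_all
  then have "?lower \<in> cylinder A B \<inter> upsets" "?upper \<in> cylinder A B \<inter> upsets"
    unfolding cylinder_Int_upsets
    by (simp_all add: UN_up_in_upsets INT_compl_down_in_upsets)
  then have "?lower = x" "?upper = x"
    by (simp_all add: singleton)
  with \<open>finite A\<close> \<open>finite B\<close> show "finite_union_of_ups x \<and> finite_inter_of_codowns x"
    unfolding finite_union_of_ups_def finite_inter_of_codowns_def by metis
next
  assume "finite_union_of_ups x \<and> finite_inter_of_codowns x"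
  then obtain F G where "finite F" "finite G"
    and lower: "x = (\<Union>a\<in>F. up a)" and upper: "x = (\<Inter>b\<in>G. - down b)"
    unfolding finite_union_of_ups_def finite_inter_of_codowns_def by blast
  have "cylinder F G \<inter> upsets = {y \<in> upsets. x \<subseteq> y \<and> y \<subseteq> x}"
    unfolding cylinder_Int_upsets by (simp only: flip: lower upper)
  then have singleton: "cylinder F G \<inter> upsets = {x}"
    using assms by blast
  then have "x \<in> cylinder F G"
    by blast
  with \<open>finite F\<close> \<open>finite G\<close> singleton
  show "openin (subtopology natural_topology upsets) {x}"
    using isolated_in_natural_topology[OF assms] by blast
qed

lemma finite_union_of_ups_Un:
  assumes "finite_union_of_ups x" "finite_union_of_ups y"
  shows "finite_union_of_ups (x \<union> y)"
proof -
  obtain F F' where "finite F" "x = (\<Union>a\<in>F. up a)" "finite F'" "y = (\<Union>a\<in>F'. up a)"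
    using assms unfolding finite_union_of_ups_def by blast
  then show ?thesis
    unfolding finite_union_of_ups_def by (intro exI[of _ "F \<union> F'"]) auto
qed

lemma finite_union_of_ups_Int:
  assumes "finite_union_of_ups x" "finite_union_of_ups y"
  shows "finite_union_of_ups (x \<inter> y)"
proof -
  obtain F F' where "finite F" "x = (\<Union>a\<in>F. up a)" "finite F'" "y = (\<Union>a\<in>F'. up a)"
    using assms unfolding finite_union_of_ups_def by blast
  then show ?thesis
    unfolding finite_union_of_ups_def
    by (intro exI[of _ "(\<lambda>(a, a'). a \<union> a') ` (F \<times> F')"]) (auto simp: up_def)
qed

lemma finite_inter_of_codowns_Int:
  assumes "finite_inter_of_codowns x" "finite_inter_of_codowns y"
  shows "finite_inter_of_codowns (x \<inter> y)"
proof -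
  obtain G G' where "finite G" "x = (\<Inter>b\<in>G. - down b)" "finite G'" "y = (\<Inter>b\<in>G'. - down b)"
    using assms unfolding finite_inter_of_codowns_def by blast
  then show ?thesis
    unfolding finite_inter_of_codowns_def by (intro exI[of _ "G \<union> G'"]) auto
qed

lemma finite_inter_of_codowns_Un:
  assumes "finite_inter_of_codowns x" "finite_inter_of_codowns y"
  shows "finite_inter_of_codowns (x \<union> y)"
proof -
  obtain G G' where "finite G" "x = (\<Inter>b\<in>G. - down b)" "finite G'" "y = (\<Inter>b\<in>G'. - down b)"
    using assms unfolding finite_inter_of_codowns_def by blast
  then show ?thesis
    unfolding finite_inter_of_codowns_def
    by (intro exI[of _ "(\<lambda>(b, b'). b \<inter> b') ` (G \<times> G')"]) (auto simp: down_def)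
qed

lemma lattice_gen_imp_finite_representations:
  "x \<in> lattice_gen \<Longrightarrow> finite_union_of_ups x \<and> finite_inter_of_codowns x"
proof (induction rule: lattice_gen.induct)
  case (gen_e n)
  have "e n = (\<Union>a\<in>{{n}}. up a)" "e n = (\<Inter>b\<in>{- {n}}. - down b)"
    by (auto simp: up_def down_def e_def)
  then show ?case
    unfolding finite_union_of_ups_def finite_inter_of_codowns_def by blast
next
  case gen_empty
  have "{} = (\<Union>a\<in>{}. up a)" "{} = (\<Inter>b\<in>{UNIV}. - down b)"
    by (auto simp: down_def)
  then show ?case
    unfolding finite_union_of_ups_def finite_inter_of_codowns_def by blast
next
  case gen_univ
  have "UNIV = (\<Union>a\<in>{{}}. up a)" "UNIV = (\<Inter>b\<in>{}. - down b)"
    by (auto simp: up_def)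
  then show ?case
    unfolding finite_union_of_ups_def finite_inter_of_codowns_def by blast
next
  case gen_un
  then show ?case by (simp add: finite_union_of_ups_Un finite_inter_of_codowns_Un)
next
  case gen_int
  then show ?case by (simp add: finite_union_of_ups_Int finite_inter_of_codowns_Int)
qed

lemma lattice_gen_UN:
  "finite F \<Longrightarrow> (\<And>a. a \<in> F \<Longrightarrow> f a \<in> lattice_gen) \<Longrightarrow> (\<Union>a\<in>F. f a) \<in> lattice_gen"
  by (induction F rule: finite_induct) (auto intro: lattice_gen.intros)

lemma lattice_gen_INT:
  "finite F \<Longrightarrow> (\<And>a. a \<in> F \<Longrightarrow> f a \<in> lattice_gen) \<Longrightarrow> (\<Inter>a\<in>F. f a) \<in> lattice_gen"
  by (induction F rule: finite_induct) (auto intro: lattice_gen.intros)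

lemma up_in_lattice_gen:
  assumes "finite c"
  shows "up c \<in> lattice_gen"
proof -
  have "up c = (\<Inter>n\<in>c. e n)" by (auto simp: up_def e_def)
  then show ?thesis using lattice_gen_INT[OF assms] by (simp add: gen_e)
qed

lemma finite_subset_in_INT_compl_down:
  assumes "finite G" "a \<in> (\<Inter>b\<in>G. - down b)"
  obtains c where "finite c" "c \<subseteq> a" "c \<in> (\<Inter>b\<in>G. - down b)"
proof -
  from assms(2) have "\<forall>b\<in>G. \<exists>n. n \<in> a \<and> n \<notin> b"
    by (auto simp: down_def)
  then obtain pick where pick: "\<forall>b\<in>G. pick b \<in> a \<and> pick b \<notin> b"
    by (rule bchoice[elim_format]) blast
  have "finite (pick ` G)" "pick ` G \<subseteq> a" "pick ` G \<in> (\<Inter>b\<in>G. - down b)"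
    using assms(1) pick by (auto simp: down_def)
  then show ?thesis using that by blast
qed

lemma finite_representations_imp_lattice_gen:
  assumes "finite_union_of_ups x" "finite_inter_of_codowns x"
  shows "x \<in> lattice_gen"
proof -
  obtain F G where F: "finite F" "x = (\<Union>a\<in>F. up a)" and G: "finite G" "x = (\<Inter>b\<in>G. - down b)"
    using assms unfolding finite_union_of_ups_def finite_inter_of_codowns_def by blast
  have "\<exists>c. finite c \<and> c \<subseteq> a \<and> c \<in> x" if "a \<in> F" for a
  proof -
    have "a \<in> (\<Inter>b\<in>G. - down b)"
      using that F(2) G(2) by (auto simp: up_def)
    then obtain c where "finite c" "c \<subseteq> a" "c \<in> (\<Inter>b\<in>G. - down b)"
      by (rule finite_subset_in_INT_compl_down[OF G(1)])
    then show ?thesis using G(2) by blast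
  qed
  then obtain shrink where shrink: "\<forall>a\<in>F. finite (shrink a) \<and> shrink a \<subseteq> a \<and> shrink a \<in> x"
    by (metis (mono_tags))
  have "x \<in> upsets"
    using G(2) INT_compl_down_in_upsets by simp
  then have "up (shrink a) \<subseteq> x" if "a \<in> F" for a
    using shrink that unfolding upsets_def up_def by blast
  moreover have "up a \<subseteq> up (shrink a)" if "a \<in> F" for a
    using shrink that by (auto simp: up_def)
  ultimately have "x = (\<Union>a\<in>F. up (shrink a))"
    using F(2) by blast
  then show ?thesis
    using F(1) shrink by (auto intro: lattice_gen_UN up_in_lattice_gen)
qed

theorem corollary5p2:
  assumes "x \<in> upsets"
  shows "(openin (subtopology natural_topology upsets) {x}
            \<longleftrightarrow> ((\<exists>F. finite F \<and> x = (\<Union>a\<in>F. up a))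
                 \<and> (\<exists>G. finite G \<and> x = (\<Inter>b\<in>G. - down b))))
       \<and> (((\<exists>F. finite F \<and> x = (\<Union>a\<in>F. up a))
                 \<and> (\<exists>G. finite G \<and> x = (\<Inter>b\<in>G. - down b)))
            \<longleftrightarrow> x \<in> lattice_gen)"
  using isolated_upset_iff[OF assms] lattice_gen_imp_finite_representations[of x]
    finite_representations_imp_lattice_gen[of x]
  unfolding finite_union_of_ups_def finite_inter_of_codowns_def by blast

end
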